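(* Let $d \geq 1$ and $j \geq 0$. The space $w_{1^j2}(\mathbb{C}^d)$ is homotopy equivalent to $w_{1^j}(\mathbb{C}^d - pt)$, the configuration space of $j$ unordered distinct points in $\mathbb{C}^d$ with one point removed.
   Context: For a space $X$, $Sym^k(X)$ denotes the quotient of $X^k$ by the permutation action of the symmetric group on $k$ letters. A point of $Sym^k(X)$ determines a partition of $k$ by recording multiplicities of the points appearing in it. For a partition $\lambda$ of $k$, $w_\lambda(X)$ is the subspace of $Sym^k(X)$ of points with associated partition $\lambda$. Here $1^j2$ denotes the partition $1+\cdots+1+2$ of $j+2$ with $j$ ones, and $1^j$ the partition of $j$ into $j$ ones. *)

theory Defs
  imports "HOL-Analysis.Analysis" "HOL-Library.Multiset"
begin

definition quotient_topology :: "'a topology \<Rightarrow> ('a \<Rightarrow> 'b) \<Rightarrow> 'b topology" where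
  "quotient_topology X f =
     topology (\<lambda>U. U \<subseteq> f ` topspace X \<and> openin X {x \<in> topspace X. f x \<in> U})"

definition sym_map :: "nat \<Rightarrow> (nat \<Rightarrow> 'a) \<Rightarrow> 'a multiset" where
  "sym_map k x = image_mset x (mset_set {..<k})"

text \<open>Sym^k(X) = X^k / S_k with the quotient topology; points are multisets of size k.\<close>
definition Sym :: "nat \<Rightarrow> 'a topology \<Rightarrow> 'a multiset topology" where
  "Sym k X = quotient_topology (product_topology (\<lambda>i. X) {..<k}) (sym_map k)"

text \<open>The partition of k determined by a point of Sym^k(X): the multiset of multiplicities.\<close>
definition partition_of :: "'a multiset \<Rightarrow> nat multiset" where
  "partition_of M = image_mset (count M) (mset_set (set_mset M))"

definition w :: "nat multiset \<Rightarrow> 'a topology \<Rightarrow> 'a multiset topology" where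
  "w lam X = subtopology (Sym (sum_mset lam) X) {M. partition_of M = lam}"

end

(*
  A configuration M of type 1^j 2 has a unique double point c(M), and c depends continuously
  on M: on the open set of ordered tuples whose coordinates a and b coincide it is just the
  coordinate x_a. Removing the double point and translating by p - c(M) maps w_{1^j 2}(V) to
  the configurations of j distinct points of V - {p}; adding p twice maps back. The second
  composite is the identity, and the first is homotopic to the identity by translating the
  whole configuration by t (p - c(M)), t \<in> [0, 1], which preserves the multiplicity pattern.
  Continuity on Sym^k is checked on ordered tuples: the quotient by the finite symmetric group
  is an open map, so its restrictions to saturated subspaces are again quotient maps. The
  argument works in any real normed vector space V in place of C^d.
*)
theory Submission
  imports Defs "HOL-Combinatorics.Permutations"
begin

lemma istopology_quotient:
  "istopology (\<lambda>U. U \<subseteq> f ` topspace X \<and> openin X {x \<in> topspace X. f x \<in> U})"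
proof -
  have Int: "{x \<in> topspace X. f x \<in> S \<inter> T} = {x \<in> topspace X. f x \<in> S} \<inter> {x \<in> topspace X. f x \<in> T}"
    for S T by blast
  have Union: "{x \<in> topspace X. f x \<in> \<Union>\<K>} = (\<Union>U\<in>\<K>. {x \<in> topspace X. f x \<in> U})" for \<K>
    by blast
  show ?thesis
    unfolding istopology_def Int Union by auto
qed

lemma openin_quotient_topology:
  "openin (quotient_topology X f) U \<longleftrightarrow> U \<subseteq> f ` topspace X \<and> openin X {x \<in> topspace X. f x \<in> U}"
  unfolding quotient_topology_def by (simp add: topology_inverse'[OF istopology_quotient])

lemma topspace_quotient_topology: "topspace (quotient_topology X f) = f ` topspace X"
proof (rule antisym)
  show "topspace (quotient_topology X f) \<subseteq> f ` topspace X"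
    by (metis openin_quotient_topology openin_topspace)
  have "{x \<in> topspace X. f x \<in> f ` topspace X} = topspace X" by blast
  then show "f ` topspace X \<subseteq> topspace (quotient_topology X f)"
    by (intro openin_subset) (simp add: openin_quotient_topology)
qed

lemma quotient_map_quotient_topology: "quotient_map X (quotient_topology X f) f"
  unfolding quotient_map_def topspace_quotient_topology openin_quotient_topology by simp

abbreviation power_topology :: "nat \<Rightarrow> 'a topology \<Rightarrow> (nat \<Rightarrow> 'a) topology" where
  "power_topology k X \<equiv> product_topology (\<lambda>i. X) {..<k}"

lemma quotient_map_sym_map: "quotient_map (power_topology k X) (Sym k X) (sym_map k)"
  unfolding Sym_def by (rule quotient_map_quotient_topology)

lemmas continuous_map_sym_map = quotient_imp_continuous_map[OF quotient_map_sym_map]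

lemma sym_map_eq_mset: "sym_map k x = mset (map x [0..<k])"
  by (simp add: sym_map_def atLeast0LessThan)

lemma count_sym_map: "count (sym_map k x) y = card {i \<in> {..<k}. x i = y}"
proof -
  have "count (sym_map k x) y = card (x -` {y} \<inter> {..<k})"
    unfolding sym_map_def count_image_mset by simp
  also have "x -` {y} \<inter> {..<k} = {i \<in> {..<k}. x i = y}" by blast
  finally show ?thesis .
qed

lemma size_sym_map [simp]: "size (sym_map k x) = k"
  by (simp add: sym_map_def)

lemma set_mset_sym_map [simp]: "set_mset (sym_map k x) = x ` {..<k}"
  by (simp add: sym_map_def)

lemma topspace_Sym: "topspace (Sym k X) = {M. size M = k \<and> set_mset M \<subseteq> topspace X}"
proof (intro set_eqI iffI)
  fix M assume "M \<in> topspace (Sym k X)"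
  then show "M \<in> {M. size M = k \<and> set_mset M \<subseteq> topspace X}"
    unfolding Sym_def topspace_quotient_topology by (auto simp: PiE_def Pi_def)
next
  fix M assume M: "M \<in> {M. size M = k \<and> set_mset M \<subseteq> topspace X}"
  obtain xs where xs: "mset xs = M" using ex_mset by blast
  have len: "length xs = k" using M by (simp flip: xs)
  define x where "x = restrict (\<lambda>i. xs ! i) {..<k}"
  have "sym_map k x = mset (map (\<lambda>i. xs ! i) [0..<length xs])"
    unfolding sym_map_eq_mset x_def len by (intro arg_cong[where f=mset] map_cong) auto
  then have "sym_map k x = M" by (simp add: map_nth xs)
  moreover have "x \<in> topspace (power_topology k X)"
    using M len by (auto simp: x_def simp flip: xs)
  ultimately show "M \<in> topspace (Sym k X)"
    unfolding Sym_def topspace_quotient_topology by blast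
qed

lemma sym_map_eq_obtains_permutation:
  assumes "sym_map k x = sym_map k u" "u \<in> extensional {..<k}"
  obtains \<pi> where "\<pi> permutes {..<k}" "u = restrict (x \<circ> \<pi>) {..<k}"
proof -
  have "mset (map u [0..<k]) = mset (map x [0..<k])"
    using assms(1) by (simp add: sym_map_eq_mset)
  then obtain \<pi> where \<pi>: "\<pi> permutes {..<k}" "permute_list \<pi> (map x [0..<k]) = map u [0..<k]"
    by (metis length_map length_upt diff_zero mset_eq_permutation)
  have "u i = x (\<pi> i)" if "i < k" for i
  proof -
    have "\<pi> i < k" using \<pi>(1) that by (metis lessThan_iff permutes_in_image)
    then have "permute_list \<pi> (map x [0..<k]) ! i = x (\<pi> i)"
      using that by (simp add: permute_list_def)
    then show ?thesis using \<pi>(2) that by simp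
  qed
  then have "u = restrict (x \<circ> \<pi>) {..<k}"
    using assms(2) by (intro ext) (auto simp: extensional_def)
  with \<pi>(1) that show ?thesis by blast
qed

lemma sym_map_permute:
  assumes "\<pi> permutes {..<k}"
  shows "sym_map k (restrict (x \<circ> \<pi>) {..<k}) = sym_map k x"
proof -
  have "sym_map k (restrict (x \<circ> \<pi>) {..<k}) = image_mset (x \<circ> \<pi>) (mset_set {..<k})"
    unfolding sym_map_def by (intro image_mset_cong) auto
  also have "\<dots> = image_mset x (image_mset \<pi> (mset_set {..<k}))"
    by (simp add: multiset.map_comp)
  also have "image_mset \<pi> (mset_set {..<k}) = mset_set {..<k}"
    using assms by (simp add: image_mset_mset_set permutes_inj_on permutes_image)
  also have "image_mset x (mset_set {..<k}) = sym_map k x"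
    by (simp add: sym_map_def)
  finally show ?thesis .
qed

lemma continuous_map_permute:
  assumes "\<pi> permutes {..<k}"
  shows "continuous_map (power_topology k X) (power_topology k X) (\<lambda>x. restrict (x \<circ> \<pi>) {..<k})"
  unfolding continuous_map_componentwise
proof (intro conjI ballI)
  fix i assume "i \<in> {..<k}"
  then have "\<pi> i \<in> {..<k}" using assms by (metis permutes_in_image)
  then have "continuous_map (power_topology k X) X (\<lambda>x. x (\<pi> i))"
    by (rule continuous_map_product_projection)
  then show "continuous_map (power_topology k X) X (\<lambda>x. restrict (x \<circ> \<pi>) {..<k} i)"
    using \<open>i \<in> {..<k}\<close> by simp
qed auto

text \<open>The saturation of an open set is the finite union of its images under the
  coordinate permutations.\<close>
lemma open_map_sym_map: "open_map (power_topology k X) (Sym k X) (sym_map k)"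
  unfolding open_map_def
proof (intro allI impI)
  fix U assume U: "openin (power_topology k X) U"
  let ?X = "power_topology k X"
  have saturation: "{x \<in> topspace ?X. sym_map k x \<in> sym_map k ` U} =
     (\<Union>\<pi>\<in>{\<pi>. \<pi> permutes {..<k}}. {x \<in> topspace ?X. restrict (x \<circ> \<pi>) {..<k} \<in> U})"
  proof (intro set_eqI iffI)
    fix x assume "x \<in> {x \<in> topspace ?X. sym_map k x \<in> sym_map k ` U}"
    then obtain u where x: "x \<in> topspace ?X" and u: "u \<in> U" "sym_map k x = sym_map k u"
      by auto
    have "u \<in> extensional {..<k}" using u openin_subset[OF U] by (auto simp: PiE_def)
    with u(2) obtain \<pi> where "\<pi> permutes {..<k}" "u = restrict (x \<circ> \<pi>) {..<k}"
      by (rule sym_map_eq_obtains_permutation)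
    with u x show "x \<in> (\<Union>\<pi>\<in>{\<pi>. \<pi> permutes {..<k}}. {x \<in> topspace ?X. restrict (x \<circ> \<pi>) {..<k} \<in> U})"
      by blast
  next
    fix x assume "x \<in> (\<Union>\<pi>\<in>{\<pi>. \<pi> permutes {..<k}}. {x \<in> topspace ?X. restrict (x \<circ> \<pi>) {..<k} \<in> U})"
    then obtain \<pi> where "\<pi> permutes {..<k}" "x \<in> topspace ?X" "restrict (x \<circ> \<pi>) {..<k} \<in> U"
      by blast
    then show "x \<in> {x \<in> topspace ?X. sym_map k x \<in> sym_map k ` U}"
      by (metis (mono_tags, lifting) image_eqI mem_Collect_eq sym_map_permute)
  qed
  have "openin ?X {x \<in> topspace ?X. restrict (x \<circ> \<pi>) {..<k} \<in> U}"
    if "\<pi> permutes {..<k}" for \<pi>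
    using openin_continuous_map_preimage[OF continuous_map_permute[OF that] U] .
  then have "openin ?X {x \<in> topspace ?X. sym_map k x \<in> sym_map k ` U}"
    unfolding saturation by (intro openin_Union) blast
  moreover have "sym_map k ` U \<subseteq> sym_map k ` topspace ?X"
    using openin_subset[OF U] by blast
  ultimately show "openin (Sym k X) (sym_map k ` U)"
    unfolding Sym_def openin_quotient_topology by blast
qed

lemma quotient_map_sym_map_subtopology:
  "quotient_map (subtopology (power_topology k X) {x \<in> topspace (power_topology k X). sym_map k x \<in> S})
     (subtopology (Sym k X) S) (sym_map k)"
proof (rule continuous_open_imp_quotient_map)
  show "continuous_map (subtopology (power_topology k X) {x \<in> topspace (power_topology k X). sym_map k x \<in> S})
     (subtopology (Sym k X) S) (sym_map k)"
    by (intro continuous_map_into_subtopology continuous_map_from_subtopology continuous_map_sym_map) auto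
  show "open_map (subtopology (power_topology k X) {x \<in> topspace (power_topology k X). sym_map k x \<in> S})
     (subtopology (Sym k X) S) (sym_map k)"
    by (rule open_map_restriction[OF open_map_sym_map])
      (simp add: Sym_def topspace_quotient_topology)
  show "sym_map k ` topspace (subtopology (power_topology k X) {x \<in> topspace (power_topology k X). sym_map k x \<in> S})
    = topspace (subtopology (Sym k X) S)"
    by (auto simp: Sym_def topspace_quotient_topology)
qed

lemma sum_mset_partition_of [simp]: "sum_mset (partition_of M) = size M"
  unfolding partition_of_def by (simp add: sum_unfold_sum_mset size_multiset_overloaded_eq)

lemma count_in_partition_of: "x \<in># M \<Longrightarrow> count M x \<in># partition_of M"
  unfolding partition_of_def by simp

lemma partition_of_image_mset_inj:
  assumes "inj h"
  shows "partition_of (image_mset h M) = partition_of M"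
proof -
  have "count (image_mset h M) (h x) = count M x" for x
  proof -
    have "h -` {h x} = {x}" using assms by (auto dest: injD)
    then show ?thesis by (cases "x \<in># M") (auto simp: count_image_mset not_in_iff)
  qed
  moreover have "mset_set (h ` set_mset M) = image_mset h (mset_set (set_mset M))"
    using assms by (simp add: image_mset_mset_set inj_on_subset)
  ultimately show ?thesis
    by (simp add: partition_of_def multiset.map_comp comp_def)
qed

lemma partition_of_add_new_point:
  assumes "c \<notin># N" "n > 0"
  shows "partition_of (replicate_mset n c + N) = add_mset n (partition_of N)"
proof -
  let ?M = "replicate_mset n c + N"
  have "set_mset ?M = insert c (set_mset N)" using assms(2) by auto
  then have "mset_set (set_mset ?M) = add_mset c (mset_set (set_mset N))"
    using assms(1) by simp
  moreover have "count ?M c = n" using assms(1) by (simp add: not_in_iff)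
  moreover have "image_mset (count ?M) (mset_set (set_mset N)) = partition_of N"
    unfolding partition_of_def using assms(1) by (intro image_mset_cong) auto
  ultimately show ?thesis by (simp add: partition_of_def)
qed

lemma partition_of_eq_ones_iff:
  "partition_of M = replicate_mset j 1 \<longleftrightarrow> size M = j \<and> (\<forall>x. count M x \<le> 1)"
proof
  assume ones: "partition_of M = replicate_mset j 1"
  have "count M x \<le> 1" for x
    using count_in_partition_of[of x M] by (cases "x \<in># M") (auto simp: ones not_in_iff split: if_splits)
  moreover have "size M = j" using sum_mset_partition_of[of M] by (simp add: ones)
  ultimately show "size M = j \<and> (\<forall>x. count M x \<le> 1)" by blast
next
  assume M: "size M = j \<and> (\<forall>x. count M x \<le> 1)"
  then have "count M x = 1" if "x \<in># M" for x
    using that by (metis count_greater_zero_iff le_neq_implies_less less_one not_less_zero)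
  then have "partition_of M = image_mset (\<lambda>_. 1) (mset_set (set_mset M))"
    unfolding partition_of_def by (intro image_mset_cong) auto
  also have "card (set_mset M) = size M"
    using \<open>\<And>x. x \<in># M \<Longrightarrow> count M x = 1\<close> by (simp add: size_multiset_overloaded_eq)
  ultimately show "partition_of M = replicate_mset j 1" using M by (simp add: image_mset_const_eq)
qed

lemma partition_of_eq_ones_two_iff:
  "partition_of M = replicate_mset j 1 + {#2#} \<longleftrightarrow>
     (\<exists>c N. M = replicate_mset 2 c + N \<and> c \<notin># N \<and> size N = j \<and> (\<forall>x. count N x \<le> 1))"
proof
  assume M: "partition_of M = replicate_mset j 1 + {#2#}"
  then have "2 \<in># partition_of M" by simp
  then obtain c where c: "count M c = 2"
    unfolding partition_of_def by auto
  define N where "N = M - replicate_mset 2 c"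
  have decomp: "M = replicate_mset 2 c + N"
    unfolding N_def using c by (intro subset_mset.add_diff_inverse[symmetric]) (simp add: subseteq_mset_def)
  have "c \<notin># N" using c by (simp add: N_def not_in_iff)
  have "add_mset 2 (partition_of N) = add_mset 2 (replicate_mset j 1)"
    using M partition_of_add_new_point[OF \<open>c \<notin># N\<close>, of 2] by (simp flip: decomp)
  then have "size N = j \<and> (\<forall>x. count N x \<le> 1)"
    using partition_of_eq_ones_iff by auto
  with \<open>c \<notin># N\<close> show "\<exists>c N. M = replicate_mset 2 c + N \<and> c \<notin># N \<and> size N = j \<and> (\<forall>x. count N x \<le> 1)"
    using decomp by blast
next
  assume "\<exists>c N. M = replicate_mset 2 c + N \<and> c \<notin># N \<and> size N = j \<and> (\<forall>x. count N x \<le> 1)"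
  then obtain c N where N: "M = replicate_mset 2 c + N" "c \<notin># N"
    and "size N = j \<and> (\<forall>x. count N x \<le> 1)"
    by blast
  then have "partition_of N = replicate_mset j 1" using partition_of_eq_ones_iff by blast
  with N show "partition_of M = replicate_mset j 1 + {#2#}"
    by (simp add: partition_of_add_new_point)
qed

text \<open>Meaningful only when exactly one point has multiplicity 2, as for points of type 1^j 2.\<close>
definition double_point :: "'a multiset \<Rightarrow> 'a" where
  "double_point M = (THE c. count M c = 2)"

lemma double_point_eq:
  assumes "c \<notin># N" "\<forall>x. count N x \<le> 1"
  shows "double_point (replicate_mset 2 c + N) = c"
  unfolding double_point_def
proof (rule the_equality)
  show "count (replicate_mset 2 c + N) c = 2" using assms(1) by (simp add: not_in_iff)
  fix y assume "count (replicate_mset 2 c + N) y = 2"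
  then show "y = c" using assms(2)[rule_format, of y] by (cases "y = c") auto
qed

lemma ones_two_decomposition:
  assumes "partition_of M = replicate_mset j 1 + {#2#}"
  obtains N where "M = replicate_mset 2 (double_point M) + N" "double_point M \<notin># N"
    "size N = j" "\<forall>x. count N x \<le> 1"
proof -
  obtain c N where N: "M = replicate_mset 2 c + N" "c \<notin># N" "size N = j" "\<forall>x. count N x \<le> 1"
    using assms unfolding partition_of_eq_ones_two_iff by blast
  moreover from this have "double_point M = c" by (simp add: double_point_eq)
  ultimately show ?thesis using that[of N] by simp
qed

lemma count_ones_two:
  assumes "partition_of M = replicate_mset j 1 + {#2#}"
  shows "count M (double_point M) = 2" "y \<noteq> double_point M \<Longrightarrow> count M y \<le> 1"
proof -
  obtain N where N: "M = replicate_mset 2 (double_point M) + N" "double_point M \<notin># N"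
    "\<forall>x. count N x \<le> 1"
    using ones_two_decomposition[OF assms] by blast
  show "count M (double_point M) = 2"
    using N(2) by (subst N(1)) (simp add: not_in_iff)
  show "count M y \<le> 1" if "y \<noteq> double_point M"
    using N(3) that by (subst N(1)) simp
qed

definition tuples_of_type :: "nat multiset \<Rightarrow> 'a topology \<Rightarrow> (nat \<Rightarrow> 'a) set" where
  "tuples_of_type lam X = {x \<in> topspace (power_topology (sum_mset lam) X).
     partition_of (sym_map (sum_mset lam) x) = lam}"

lemma quotient_map_w:
  assumes "sum_mset lam = k"
  shows "quotient_map (subtopology (power_topology k X) (tuples_of_type lam X)) (w lam X) (sym_map k)"
  unfolding w_def tuples_of_type_def assms
  using quotient_map_sym_map_subtopology[where k = k and S = "{M. partition_of M = lam}"] by simp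

lemma topspace_w: "topspace (w lam X) = {M. set_mset M \<subseteq> topspace X \<and> partition_of M = lam}"
  by (auto simp: w_def topspace_Sym)

lemma continuous_map_sym_map_into_w:
  assumes "sum_mset lam = k" "continuous_map Z (power_topology k X) r"
    and "\<And>z. z \<in> topspace Z \<Longrightarrow> sym_map k (r z) \<in> topspace (w lam X)"
  shows "continuous_map Z (w lam X) (sym_map k \<circ> r)"
  using continuous_map_compose[OF assms(2) continuous_map_sym_map] assms(1,3)
  unfolding w_def continuous_map_in_subtopology topspace_subtopology by auto

lemma coincidence_at_double_point:
  assumes x: "partition_of (sym_map k x) = replicate_mset j 1 + {#2#}"
    and ab: "a < k" "b < k" "a \<noteq> b" "x a = x b"
  shows "x a = double_point (sym_map k x)" "{i \<in> {..<k}. x i = x a} = {a, b}"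
proof -
  have ab_sub: "{a, b} \<subseteq> {i \<in> {..<k}. x i = x a}" using ab by auto
  then have "count (sym_map k x) (x a) \<ge> 2"
    using card_mono[OF _ ab_sub] ab(3) by (simp add: count_sym_map)
  then show dp: "x a = double_point (sym_map k x)"
    using count_ones_two(2)[OF x, of "x a"] by linarith
  have "card {i \<in> {..<k}. x i = x a} = 2"
    using count_ones_two(1)[OF x] by (simp add: count_sym_map flip: dp)
  then show "{i \<in> {..<k}. x i = x a} = {a, b}"
    using ab_sub ab(3) by (intro card_subset_eq[symmetric]) auto
qed

lemma coincidence_unique:
  assumes x: "partition_of (sym_map k x) = replicate_mset j 1 + {#2#}"
    and ab: "a < k" "b < k" "a \<noteq> b" "x a = x b"
    and ii': "i < k" "i' < k" "i \<noteq> i'" "x i = x i'"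
  shows "{i, i'} = {a, b}"
  using coincidence_at_double_point[OF x ab] coincidence_at_double_point[OF x ii'] by simp

lemma obtain_coincidence:
  assumes x: "partition_of (sym_map k x) = replicate_mset j 1 + {#2#}"
  obtains a b where "a < k" "b < k" "a \<noteq> b" "x a = x b"
proof -
  have "card {i \<in> {..<k}. x i = double_point (sym_map k x)} = 2"
    using count_ones_two(1)[OF x] by (simp add: count_sym_map)
  then obtain a b where ab: "{i \<in> {..<k}. x i = double_point (sym_map k x)} = {a, b}" "a \<noteq> b"
    unfolding card_2_iff by blast
  then have "a \<in> {i \<in> {..<k}. x i = double_point (sym_map k x)}"
    and "b \<in> {i \<in> {..<k}. x i = double_point (sym_map k x)}"
    by simp_all
  with ab(2) show ?thesis using that[of a b] by simp
qed

lemma openin_distinct_coordinates: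
  assumes "P \<subseteq> {..<k} \<times> {..<k}"
  shows "openin (power_topology k (euclidean :: 'a::real_normed_vector topology))
           {x \<in> topspace (power_topology k euclidean). \<forall>(i, i') \<in> P. x i \<noteq> x i'}"
proof -
  let ?X = "power_topology k (euclidean :: 'a topology)"
  have "openin ?X {x \<in> topspace ?X. x (fst q) - x (snd q) \<in> - {0}}" if "q \<in> P" for q
  proof (rule openin_continuous_map_preimage)
    show "continuous_map ?X euclidean (\<lambda>x. x (fst q) - x (snd q))"
      using that assms by (intro continuous_map_diff continuous_map_product_projection) auto
  qed auto
  then have "openin ?X ((\<Inter>q\<in>P. {x \<in> topspace ?X. x (fst q) \<noteq> x (snd q)}) \<inter> topspace ?X)"
    using finite_subset[OF assms] by (intro openin_INT) auto
  moreover have "(\<Inter>q\<in>P. {x \<in> topspace ?X. x (fst q) \<noteq> x (snd q)}) \<inter> topspace ?X =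
      {x \<in> topspace ?X. \<forall>(i, i') \<in> P. x i \<noteq> x i'}"
    by fastforce
  ultimately show ?thesis by simp
qed

definition coincident_tuples :: "nat \<Rightarrow> nat \<Rightarrow> nat \<Rightarrow> (nat \<Rightarrow> 'a::real_normed_vector) set" where
  "coincident_tuples j a b = {x \<in> tuples_of_type (replicate_mset j 1 + {#2#}) euclidean. x a = x b}"

lemma openin_coincident_tuples:
  assumes ab: "a < j + 2" "b < j + 2" "a \<noteq> b"
  shows "openin (subtopology (power_topology (j + 2) euclidean)
           (tuples_of_type (replicate_mset j 1 + {#2#}) (euclidean :: 'a::real_normed_vector topology)))
           (coincident_tuples j a b)"
proof -
  let ?X = "power_topology (j + 2) (euclidean :: 'a topology)"
  let ?T = "tuples_of_type (replicate_mset j 1 + {#2#}) (euclidean :: 'a topology)"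
  define P where "P = {(i, i'). i < j + 2 \<and> i' < j + 2 \<and> i \<noteq> i' \<and> {i, i'} \<noteq> {a, b}}"
  let ?D = "{x \<in> topspace ?X. \<forall>(i, i') \<in> P. x i \<noteq> x i'}"
  let ?C = "coincident_tuples j a b :: (nat \<Rightarrow> 'a) set"
  have "?C = ?D \<inter> ?T"
  proof (intro set_eqI iffI)
    fix x assume x: "x \<in> ?C"
    then have po: "partition_of (sym_map (j + 2) x) = replicate_mset j 1 + {#2#}" and "x a = x b"
      by (auto simp: coincident_tuples_def tuples_of_type_def)
    have "x i \<noteq> x i'" if "(i, i') \<in> P" for i i'
    proof
      assume "x i = x i'"
      with \<open>x a = x b\<close> have "{i, i'} = {a, b}"
        using coincidence_unique[OF po ab] that by (simp add: P_def)
      with that show False by (simp add: P_def)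
    qed
    with x show "x \<in> ?D \<inter> ?T" by (auto simp: coincident_tuples_def tuples_of_type_def)
  next
    fix x assume x: "x \<in> ?D \<inter> ?T"
    then have po: "partition_of (sym_map (j + 2) x) = replicate_mset j 1 + {#2#}"
      by (simp add: tuples_of_type_def)
    obtain i i' where ii': "i < j + 2" "i' < j + 2" "i \<noteq> i'" "x i = x i'"
      using obtain_coincidence[OF po] .
    moreover have "(i, i') \<notin> P" using x ii'(4) by auto
    ultimately have "{i, i'} = {a, b}" by (simp add: P_def)
    with ii' x show "x \<in> ?C"
      by (auto simp: coincident_tuples_def doubleton_eq_iff)
  qed
  moreover have "openin ?X ?D" by (rule openin_distinct_coordinates) (auto simp: P_def)
  ultimately show ?thesis by (auto simp: openin_subtopology)
qed

lemma double_point_coincident_tuples: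
  assumes "x \<in> coincident_tuples j a b" "a < j + 2" "b < j + 2" "a \<noteq> b"
  shows "double_point (sym_map (j + 2) x) = x a"
  using assms coincidence_at_double_point(1)[of "j + 2" x j a b]
  by (simp add: coincident_tuples_def tuples_of_type_def)

lemma continuous_map_by_coincidence:
  assumes "\<And>a b. a < j + 2 \<Longrightarrow> b < j + 2 \<Longrightarrow> a \<noteq> b \<Longrightarrow>
    continuous_map (subtopology (power_topology (j + 2) euclidean) (coincident_tuples j a b)) Y h"
  shows "continuous_map (subtopology (power_topology (j + 2) euclidean)
    (tuples_of_type (replicate_mset j 1 + {#2#}) (euclidean :: 'a::real_normed_vector topology))) Y h"
proof (rule pasting_lemma)
  let ?I = "{(a, b). a < j + 2 \<and> b < j + 2 \<and> a \<noteq> b}"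
  let ?T = "\<lambda>(a, b). coincident_tuples j a b :: (nat \<Rightarrow> 'a) set"
  let ?X = "subtopology (power_topology (j + 2) euclidean)
    (tuples_of_type (replicate_mset j 1 + {#2#}) (euclidean :: 'a topology))"
  show "openin ?X (?T q)" if "q \<in> ?I" for q
    using that openin_coincident_tuples by auto
  have "subtopology ?X (?T q) = subtopology (power_topology (j + 2) euclidean) (?T q)" for q
    by (auto simp: subtopology_subtopology coincident_tuples_def Int_absorb1 split: prod.splits)
  then show "continuous_map (subtopology ?X (?T q)) Y h" if "q \<in> ?I" for q
    using that assms by auto
  show "\<exists>q. q \<in> ?I \<and> x \<in> ?T q \<and> h x = h x" if "x \<in> topspace ?X" for x
  proof -
    have "partition_of (sym_map (j + 2) x) = replicate_mset j 1 + {#2#}"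
      using that by (simp add: tuples_of_type_def)
    then obtain a b where "a < j + 2" "b < j + 2" "a \<noteq> b" "x a = x b"
      by (rule obtain_coincidence)
    with that show ?thesis by (auto simp: coincident_tuples_def)
  qed
qed simp

lemma continuous_map_double_point:
  "continuous_map (subtopology (power_topology (j + 2) euclidean)
     (tuples_of_type (replicate_mset j 1 + {#2#}) (euclidean :: 'a::real_normed_vector topology)))
     euclidean (\<lambda>x. double_point (sym_map (j + 2) x))"
proof (rule continuous_map_by_coincidence)
  fix a b assume ab: "a < j + 2" "b < j + 2" "a \<noteq> b"
  show "continuous_map (subtopology (power_topology (j + 2) euclidean) (coincident_tuples j a b))
      euclidean (\<lambda>x :: nat \<Rightarrow> 'a. double_point (sym_map (j + 2) x))"
  proof (rule continuous_map_eq)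
    show "continuous_map (subtopology (power_topology (j + 2) euclidean) (coincident_tuples j a b))
        euclidean (\<lambda>x :: nat \<Rightarrow> 'a. x a)"
      using ab by (intro continuous_map_from_subtopology continuous_map_product_projection) simp
    fix x assume "x \<in> topspace (subtopology (power_topology (j + 2) euclidean) (coincident_tuples j a b))"
    then show "x a = double_point (sym_map (j + 2) x)"
      using double_point_coincident_tuples[of x j a b] ab by auto
  qed
qed

abbreviation double_config_space :: "nat \<Rightarrow> 'a::real_normed_vector multiset topology" where
  "double_config_space j \<equiv> w (replicate_mset j 1 + {#2#}) euclidean"

abbreviation punctured_config_space :: "nat \<Rightarrow> 'a::real_normed_vector \<Rightarrow> 'a multiset topology" where
  "punctured_config_space j p \<equiv> w (replicate_mset j 1) (subtopology euclidean (UNIV - {p}))"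

definition drop_double :: "'a::real_normed_vector \<Rightarrow> 'a multiset \<Rightarrow> 'a multiset" where
  "drop_double p M =
     image_mset (\<lambda>y. y - double_point M + p) (M - replicate_mset 2 (double_point M))"

definition add_double :: "'a \<Rightarrow> 'a multiset \<Rightarrow> 'a multiset" where
  "add_double p N = replicate_mset 2 p + N"

definition slide_double :: "'a::real_normed_vector \<Rightarrow> real \<times> 'a multiset \<Rightarrow> 'a multiset" where
  "slide_double p = (\<lambda>(t, M). image_mset (\<lambda>y. y + t *\<^sub>R (p - double_point M)) M)"

lemma topspace_double_config_space:
  "topspace (double_config_space j) = {M. partition_of M = replicate_mset j 1 + {#2#}}"
  by (simp add: topspace_w)

lemma topspace_punctured_config_space:
  "topspace (punctured_config_space j p) = {N. p \<notin># N \<and> size N = j \<and> (\<forall>x. count N x \<le> 1)}"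
  unfolding topspace_w partition_of_eq_ones_iff by auto

lemma drop_double_in_punctured_config_space:
  assumes "M \<in> topspace (double_config_space j)"
  shows "drop_double p M \<in> topspace (punctured_config_space j p)"
proof -
  have "partition_of M = replicate_mset j 1 + {#2#}"
    using assms unfolding topspace_double_config_space by blast
  then obtain N where N: "M = replicate_mset 2 (double_point M) + N" "double_point M \<notin># N"
    "size N = j" "\<forall>x. count N x \<le> 1"
    by (rule ones_two_decomposition)
  let ?\<tau> = "\<lambda>y. y - double_point M + p"
  have "inj ?\<tau>" by (rule injI) simp
  have "partition_of N = replicate_mset j 1"
    using N(3,4) partition_of_eq_ones_iff by blast
  then have "partition_of (image_mset ?\<tau> N) = replicate_mset j 1"
    by (simp add: partition_of_image_mset_inj[OF \<open>inj ?\<tau>\<close>])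
  moreover have "p \<notin># image_mset ?\<tau> N" using N(2) by auto
  moreover have "drop_double p M = image_mset ?\<tau> N"
    unfolding drop_double_def by (subst (2) N(1)) simp
  ultimately show ?thesis unfolding topspace_w by auto
qed

lemma add_double_in_double_config_space:
  assumes "N \<in> topspace (punctured_config_space j p)"
  shows "add_double p N \<in> topspace (double_config_space j)"
  using assms unfolding topspace_punctured_config_space topspace_double_config_space
    partition_of_eq_ones_two_iff add_double_def by blast

lemma drop_add_double:
  assumes "N \<in> topspace (punctured_config_space j p)"
  shows "drop_double p (add_double p N) = N"
proof -
  have "p \<notin># N" "\<forall>x. count N x \<le> 1"
    using assms unfolding topspace_punctured_config_space by auto
  then have "double_point (replicate_mset 2 p + N) = p" by (rule double_point_eq)
  then show ?thesis by (simp add: drop_double_def add_double_def)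
qed

lemma slide_double_in_double_config_space:
  assumes "M \<in> topspace (double_config_space j)"
  shows "slide_double p (t, M) \<in> topspace (double_config_space j)"
proof -
  have "inj (\<lambda>y. y + t *\<^sub>R (p - double_point M))" by (rule injI) simp
  then have "partition_of (slide_double p (t, M)) = partition_of M"
    by (simp add: slide_double_def partition_of_image_mset_inj)
  with assms show ?thesis unfolding topspace_double_config_space by simp
qed

lemma slide_double_0: "slide_double p (0, M) = M"
  by (simp add: slide_double_def)

lemma slide_double_1:
  assumes "M \<in> topspace (double_config_space j)"
  shows "slide_double p (1, M) = add_double p (drop_double p M)"
proof -
  have "partition_of M = replicate_mset j 1 + {#2#}"
    using assms unfolding topspace_double_config_space by blast
  then obtain N where N: "M = replicate_mset 2 (double_point M) + N"
    by (rule ones_two_decomposition)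
  have "slide_double p (1, M) = image_mset (\<lambda>y. y - double_point M + p) M"
    by (simp add: slide_double_def algebra_simps)
  also have "\<dots> = replicate_mset 2 p + image_mset (\<lambda>y. y - double_point M + p) N"
    by (subst N) simp
  also have "\<dots> = add_double p (drop_double p M)"
    unfolding add_double_def drop_double_def by (subst (3) N) simp
  finally show ?thesis .
qed

lemma sym_map_extend_by_double:
  "sym_map (j + 2) (restrict (\<lambda>i. if i < j then y i else p) {..<j + 2}) = add_double p (sym_map j y)"
proof -
  have "map (restrict (\<lambda>i. if i < j then y i else p) {..<j + 2}) [0..<j] = map y [0..<j]"
    by (rule map_cong) auto
  then have extend: "map (restrict (\<lambda>i. if i < j then y i else p) {..<j + 2}) [0..<j + 2] =
      map y [0..<j] @ [p, p]"
    by simp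
  have "mset (map (restrict (\<lambda>i. if i < j then y i else p) {..<j + 2}) [0..<j + 2]) =
      replicate_mset 2 p + mset (map y [0..<j])"
    unfolding extend by (simp add: numeral_2_eq_2)
  then show ?thesis unfolding sym_map_eq_mset add_double_def .
qed

lemma continuous_map_add_double:
  "continuous_map (punctured_config_space j p) (double_config_space j) (add_double p)"
proof (rule continuous_compose_quotient_map[OF quotient_map_w])
  let ?Y = "subtopology (power_topology j (subtopology euclidean (UNIV - {p})))
    (tuples_of_type (replicate_mset j 1) (subtopology euclidean (UNIV - {p})))"
  let ?E = "\<lambda>y. restrict (\<lambda>i. if i < j then y i else p) {..<j + 2}"
  have "continuous_map ?Y (power_topology (j + 2) euclidean) ?E"
    unfolding continuous_map_componentwise
  proof (intro conjI ballI)
    fix i assume "i \<in> {..<j + 2}"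
    have "continuous_map ?Y euclidean (\<lambda>y. y i)" if "i < j"
      using that continuous_map_product_projection[of i "{..<j}" "\<lambda>_. subtopology euclidean (UNIV - {p})"]
      by (auto intro: continuous_map_from_subtopology simp: continuous_map_in_subtopology)
    then show "continuous_map ?Y euclidean (\<lambda>y. ?E y i)"
      using \<open>i \<in> {..<j + 2}\<close> by auto
  qed auto
  moreover have "sym_map (j + 2) (?E y) \<in> topspace (double_config_space j)" if "y \<in> topspace ?Y" for y
  proof -
    have "sym_map j y \<in> topspace (punctured_config_space j p)"
      using that unfolding topspace_w tuples_of_type_def by (auto simp: PiE_def Pi_def)
    then show ?thesis
      unfolding sym_map_extend_by_double by (rule add_double_in_double_config_space)
  qed
  ultimately have "continuous_map ?Y (double_config_space j) (sym_map (j + 2) \<circ> ?E)"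
    by (intro continuous_map_sym_map_into_w) auto
  then show "continuous_map ?Y (double_config_space j) (add_double p \<circ> sym_map j)"
    by (rule continuous_map_eq) (simp only: o_apply sym_map_extend_by_double)
qed simp

lemma sym_map_split_pair:
  assumes "a < k" "b < k" "a \<noteq> b"
  shows "sym_map k x = add_mset (x a) (add_mset (x b) (image_mset x (mset_set ({..<k} - {a, b}))))"
proof -
  have "{..<k} = insert a (insert b ({..<k} - {a, b}))" using assms by auto
  then have "mset_set {..<k} = mset_set (insert a (insert b ({..<k} - {a, b})))"
    by (rule arg_cong)
  also have "\<dots> = add_mset a (add_mset b (mset_set ({..<k} - {a, b})))"
    using assms by (simp add: mset_set.insert)
  finally show ?thesis by (simp add: sym_map_def)
qed

lemma sym_map_remaining_coordinates:
  assumes "a < j + 2" "b < j + 2" "a \<noteq> b"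
  defines "L \<equiv> sorted_list_of_set ({..<j + 2} - {a, b})"
  shows "length L = j" "i < j \<Longrightarrow> L ! i \<in> {..<j + 2} - {a, b}"
    and "image_mset f (mset_set ({..<j + 2} - {a, b})) = sym_map j (restrict (\<lambda>i. f (L ! i)) {..<j})"
proof -
  have "card ({..<j + 2} - {a, b}) = j" using assms by (simp add: card_Diff_subset)
  then show len: "length L = j" by (simp add: L_def)
  show "i < j \<Longrightarrow> L ! i \<in> {..<j + 2} - {a, b}"
    using len nth_mem[of i L] by (simp add: L_def)
  have "image_mset f (mset_set ({..<j + 2} - {a, b})) = mset (map f L)"
    by (simp add: L_def flip: sorted_list_of_mset_set)
  also have "map f L = map (restrict (\<lambda>i. f (L ! i)) {..<j}) [0..<j]"
    by (subst map_nth[symmetric]) (auto simp: len)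
  finally show "image_mset f (mset_set ({..<j + 2} - {a, b})) = sym_map j (restrict (\<lambda>i. f (L ! i)) {..<j})"
    by (simp add: sym_map_eq_mset)
qed

lemma drop_double_coincident_tuples:
  assumes x: "x \<in> coincident_tuples j a b" and ab: "a < j + 2" "b < j + 2" "a \<noteq> b"
  defines "L \<equiv> sorted_list_of_set ({..<j + 2} - {a, b})"
  shows "drop_double p (sym_map (j + 2) x) = sym_map j (restrict (\<lambda>i. x (L ! i) - x a + p) {..<j})"
proof -
  have "x a = x b" using x by (simp add: coincident_tuples_def)
  have dp: "double_point (sym_map (j + 2) x) = x a"
    by (rule double_point_coincident_tuples[OF x ab])
  have "sym_map (j + 2) x - replicate_mset 2 (x a) = image_mset x (mset_set ({..<j + 2} - {a, b}))"
    using sym_map_split_pair[OF ab, of x] \<open>x a = x b\<close> by (simp add: numeral_2_eq_2)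
  then have "drop_double p (sym_map (j + 2) x) =
      image_mset (\<lambda>i. x i - x a + p) (mset_set ({..<j + 2} - {a, b}))"
    unfolding drop_double_def dp by (simp add: multiset.map_comp comp_def)
  also have "\<dots> = sym_map j (restrict (\<lambda>i. x (L ! i) - x a + p) {..<j})"
    unfolding L_def by (rule sym_map_remaining_coordinates(3)[OF ab])
  finally show ?thesis .
qed

lemma continuous_map_remaining_coordinates:
  assumes ab: "a < j + 2" "b < j + 2" "a \<noteq> b"
  defines "L \<equiv> sorted_list_of_set ({..<j + 2} - {a, b})"
  shows "continuous_map (subtopology (power_topology (j + 2) euclidean) (coincident_tuples j a b))
      (power_topology j (subtopology euclidean (UNIV - {p})))
      (\<lambda>x. restrict (\<lambda>i. x (L ! i) - x a + p) {..<j})"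
  unfolding continuous_map_componentwise
proof (intro conjI ballI)
  let ?C = "subtopology (power_topology (j + 2) euclidean) (coincident_tuples j a b)"
  fix i assume "i \<in> {..<j}"
  then have Li: "L ! i < j + 2" "L ! i \<noteq> a" "L ! i \<noteq> b"
    using sym_map_remaining_coordinates(2)[OF ab, of i] by (auto simp: L_def)
  have "continuous_map ?C euclidean (\<lambda>x. x (L ! i) - x a + p)"
    using Li ab by (intro continuous_map_add continuous_map_diff continuous_map_from_subtopology
        continuous_map_product_projection) auto
  moreover have "x (L ! i) - x a + p \<noteq> p" if "x \<in> topspace ?C" for x
  proof
    assume "x (L ! i) - x a + p = p"
    then have eq: "x (L ! i) = x a" by simp
    have po: "partition_of (sym_map (j + 2) x) = replicate_mset j 1 + {#2#}" and "x a = x b"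
      using that by (auto simp: coincident_tuples_def tuples_of_type_def)
    then have "{L ! i, a} = {a, b}"
      using coincidence_unique[OF po ab \<open>x a = x b\<close> Li(1) ab(1) Li(2) eq] by simp
    with Li show False by (auto simp: doubleton_eq_iff)
  qed
  ultimately show "continuous_map ?C (subtopology euclidean (UNIV - {p}))
      (\<lambda>x. restrict (\<lambda>i. x (L ! i) - x a + p) {..<j} i)"
    using \<open>i \<in> {..<j}\<close> by (auto simp: continuous_map_in_subtopology)
qed auto

lemma sym_map_in_double_config_space:
  "x \<in> tuples_of_type (replicate_mset j 1 + {#2#}) euclidean \<Longrightarrow>
    sym_map (j + 2) x \<in> topspace (double_config_space j)"
  unfolding topspace_double_config_space tuples_of_type_def by simp

lemma continuous_map_drop_double:
  fixes p :: "'a::real_normed_vector"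
  shows "continuous_map (double_config_space j) (punctured_config_space j p) (drop_double p)"
proof (rule continuous_compose_quotient_map[OF quotient_map_w])
  show "continuous_map (subtopology (power_topology (j + 2) euclidean)
      (tuples_of_type (replicate_mset j 1 + {#2#}) euclidean))
      (punctured_config_space j p) (drop_double p \<circ> sym_map (j + 2))"
  proof (rule continuous_map_by_coincidence)
    fix a b assume ab: "a < j + 2" "b < j + 2" "a \<noteq> b"
    let ?C = "subtopology (power_topology (j + 2) euclidean) (coincident_tuples j a b :: (nat \<Rightarrow> 'a) set)"
    define L where "L = sorted_list_of_set ({..<j + 2} - {a, b})"
    let ?r = "\<lambda>x. restrict (\<lambda>i. x (L ! i) - x a + p) {..<j}"
    have eq: "drop_double p (sym_map (j + 2) x) = sym_map j (?r x)" if "x \<in> topspace ?C" for x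
      using that drop_double_coincident_tuples[where x = x and p = p, OF _ ab] by (simp add: L_def)
    have "continuous_map ?C (punctured_config_space j p) (sym_map j \<circ> ?r)"
    proof (rule continuous_map_sym_map_into_w)
      show "continuous_map ?C (power_topology j (subtopology euclidean (UNIV - {p}))) ?r"
        unfolding L_def by (rule continuous_map_remaining_coordinates[OF ab])
      fix x :: "nat \<Rightarrow> 'a" assume "x \<in> topspace ?C"
      then have "x \<in> tuples_of_type (replicate_mset j 1 + {#2#}) euclidean"
        by (simp add: coincident_tuples_def)
      then have "drop_double p (sym_map (j + 2) x) \<in> topspace (punctured_config_space j p)"
        by (intro drop_double_in_punctured_config_space sym_map_in_double_config_space)
      with \<open>x \<in> topspace ?C\<close> show "sym_map j (?r x) \<in> topspace (punctured_config_space j p)"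
        by (simp only: eq)
    qed simp
    then show "continuous_map ?C (punctured_config_space j p) (drop_double p \<circ> sym_map (j + 2))"
      by (rule continuous_map_eq) (simp only: o_apply eq)
  qed
qed simp

lemma continuous_map_scaleR:
  fixes g :: "'b \<Rightarrow> 'a::real_normed_vector"
  assumes "continuous_map X euclideanreal f" "continuous_map X euclidean g"
  shows "continuous_map X euclidean (\<lambda>x. f x *\<^sub>R g x)"
  using assms by (simp add: continuous_map_atin tendsto_scaleR)

lemma sym_map_slide:
  "sym_map k (restrict (\<lambda>i. x i + v) {..<k}) = image_mset (\<lambda>y. y + v) (sym_map k x)"
proof -
  have "sym_map k (restrict (\<lambda>i. x i + v) {..<k}) = image_mset (\<lambda>i. x i + v) (mset_set {..<k})"
    unfolding sym_map_def by (intro image_mset_cong) auto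
  then show ?thesis by (simp add: sym_map_def multiset.map_comp comp_def)
qed

lemma continuous_map_slide_double:
  fixes p :: "'a::real_normed_vector"
  shows "continuous_map (prod_topology (top_of_set {0..1}) (double_config_space j))
    (double_config_space j) (slide_double p)"
proof (rule continuous_compose_quotient_map[OF quotient_map_prod_right[OF _ _ quotient_map_w]])
  show "locally_compact_space (top_of_set {0..1::real})"
    by (simp add: compact_imp_locally_compact_space compact_space_subtopology)
  show "Hausdorff_space (top_of_set {0..1::real}) \<or> regular_space (top_of_set {0..1::real})"
    by (simp add: Hausdorff_space_subtopology)
  let ?T = "subtopology (power_topology (j + 2) euclidean)
    (tuples_of_type (replicate_mset j 1 + {#2#}) (euclidean :: 'a topology))"
  let ?Z = "prod_topology (top_of_set {0..1::real}) ?T"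
  let ?v = "\<lambda>z. fst z *\<^sub>R (p - double_point (sym_map (j + 2) (snd z)))"
  let ?R = "\<lambda>z. restrict (\<lambda>i. snd z i + ?v z) {..<j + 2}"
  have "continuous_map ?Z (power_topology (j + 2) euclidean) ?R"
    unfolding continuous_map_componentwise
  proof (intro conjI ballI)
    fix i assume "i \<in> {..<j + 2}"
    then have "continuous_map ?T euclidean (\<lambda>x. x i)"
      by (intro continuous_map_from_subtopology continuous_map_product_projection)
    then have coordinate: "continuous_map ?Z euclidean (\<lambda>z. snd z i)"
      using continuous_map_compose[OF continuous_map_snd] by (simp add: comp_def)
    have time: "continuous_map ?Z euclideanreal fst"
      using continuous_map_fst[of "top_of_set {0..1::real}" ?T]
      by (simp add: continuous_map_in_subtopology)
    have double: "continuous_map ?Z euclidean (\<lambda>z. double_point (sym_map (j + 2) (snd z)))"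
      using continuous_map_compose[OF continuous_map_snd continuous_map_double_point]
      by (simp add: comp_def)
    have "continuous_map ?Z euclidean (\<lambda>z. snd z i + ?v z)"
      by (intro continuous_map_add continuous_map_scaleR continuous_map_diff coordinate time double) simp
    then show "continuous_map ?Z euclidean (\<lambda>z. ?R z i)"
      using \<open>i \<in> {..<j + 2}\<close> by simp
  qed auto
  moreover have eq: "sym_map (j + 2) (?R z) = slide_double p (fst z, sym_map (j + 2) (snd z))" for z
    by (simp only: sym_map_slide slide_double_def case_prod_conv)
  moreover have "slide_double p (fst z, sym_map (j + 2) (snd z)) \<in> topspace (double_config_space j)"
    if "z \<in> topspace ?Z" for z
  proof (intro slide_double_in_double_config_space sym_map_in_double_config_space)
    show "snd z \<in> tuples_of_type (replicate_mset j 1 + {#2#}) euclidean"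
      using that by (simp add: topspace_prod_topology mem_Times_iff)
  qed
  ultimately have "continuous_map ?Z (double_config_space j) (sym_map (j + 2) \<circ> ?R)"
    by (intro continuous_map_sym_map_into_w) auto
  then show "continuous_map ?Z (double_config_space j) (slide_double p \<circ> (\<lambda>(t, x). (t, sym_map (j + 2) x)))"
    by (rule continuous_map_eq) (auto simp only: eq o_apply fst_conv snd_conv split: prod.splits)
qed simp

lemma homotopy_equivalent_double_punctured:
  fixes p :: "'a::real_normed_vector"
  shows "(double_config_space j :: 'a multiset topology) homotopy_equivalent_space
    punctured_config_space j p"
proof -
  have drop: "continuous_map (double_config_space j) (punctured_config_space j p) (drop_double p)"
    by (rule continuous_map_drop_double)
  have add: "continuous_map (punctured_config_space j p) (double_config_space j) (add_double p)"
    by (rule continuous_map_add_double)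
  have "homotopic_with (\<lambda>_. True) (double_config_space j) (double_config_space j)
      (\<lambda>M. slide_double p (0, M)) (\<lambda>M. slide_double p (1, M))"
    unfolding homotopic_with_def using continuous_map_slide_double by fastforce
  then have "homotopic_with (\<lambda>_. True) (double_config_space j) (double_config_space j)
      (add_double p \<circ> drop_double p) id"
  proof (rule homotopic_with_eq[OF homotopic_with_symD])
    fix M :: "'a multiset" assume "M \<in> topspace (double_config_space j)"
    then show "(add_double p \<circ> drop_double p) M = slide_double p (1, M)" "id M = slide_double p (0, M)"
      by (simp_all only: o_apply id_apply slide_double_0 slide_double_1)
  qed auto
  moreover have "homotopic_with (\<lambda>_. True) (punctured_config_space j p) (punctured_config_space j p)
      (drop_double p \<circ> add_double p) id"
  proof (rule homotopic_with_equal[OF _ _ continuous_map_compose[OF add drop]])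
    fix N :: "'a multiset" assume "N \<in> topspace (punctured_config_space j p)"
    then show "(drop_double p \<circ> add_double p) N = id N"
      by (simp only: o_apply id_apply drop_add_double)
  qed auto
  ultimately show ?thesis
    unfolding homotopy_equivalent_space_def using drop add by blast
qed

theorem mainTheorem3:
  fixes j :: nat and p :: "complex ^ 'd"
  shows "(w (replicate_mset j 1 + {#2#}) (euclidean :: (complex ^ 'd) topology))
           homotopy_equivalent_space
         (w (replicate_mset j 1) (subtopology euclidean (UNIV - {p})))"
  by (rule homotopy_equivalent_double_punctured)

end
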